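(* Let $P=\bigsqcup_{n\ge1}P_n$ with the operations $\dashv,\vdash,\perp$ described in the context, and extend these operations bilinearly to the graded vector space $\bigoplus_{n\ge1}K[P_n]$, where $K[P_n]$ is the $K$-vector space with basis $P_n$. Then $\bigl(\bigoplus_{n\ge1}K[P_n];\dashv,\vdash,\perp\bigr)$ is an associative trialgebra. Moreover, it is the free associative trialgebra on one generator $\{0\}\in P_1$: for every associative trialgebra $A$ and every $a\in A$ there is a unique morphism of associative trialgebras $\bigoplus_{n\ge1}K[P_n]\to A$ sending $\{0\}$ to $a$.
   Context: Let $K$ be a field. An associative trialgebra is a $K$-vector space $A$ with three bilinear operations $\dashv$ (left), $\vdash$ (right), $\perp$ (middle), $A\otimes A\to A$, satisfying for all $x,y,z\in A$ the following 11 relations: (1) $(x\dashv y)\dashv z=x\dashv(y\dashv z)$; (2) $(x\dashv y)\dashv z=x\dashv(y\vdash z)$; (3) $(x\vdash y)\dashv z=x\vdash(y\dashv z)$; (4) $(x\dashv y)\vdash z=x\vdash(y\vdash z)$; (5) $(x\vdash y)\vdash z=x\vdash(y\vdash z)$; (6) $(x\dashv y)\dashv z=x\dashv(y\perp z)$; (7) $(x\perp y)\dashv z=x\perp(y\dashv z)$; (8) $(x\dashv y)\perp z=x\perp(y\vdash z)$; (9) $(x\vdash y)\perp z=x\vdash(y\perp z)$; (10) $(x\perp y)\vdash z=x\vdash(y\vdash z)$; (11) $(x\perp y)\perp z=x\perp(y\perp z)$. A morphism of associative trialgebras is a linear map preserving all three operations. For $n\ge1$ let $[n-1]=\{0,1,\dots,n-1\}$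 and let $P_n$ be the set of nonempty subsets of $[n-1]$. For $p,q\ge1$ let $\mathrm{bij}:[p-1]\sqcup[q-1]\to[p+q-1]$ be the bijection which is the identity on the first copy and sends $k$ in the second copy to $p+k$. For $X\in P_p$ and $Y\in P_q$ define elements of $P_{p+q}$: - $X\dashv Y=\mathrm{bij}(X)$, the image of $X$ viewed in the first copy; - $X\vdash Y=\mathrm{bij}(Y)$, the image of $Y$ viewed in the second copy; - $X\perp Y=\mathrm{bij}(X\sqcup Y)$. *)

theory Defs
  imports Main "HOL.Vector_Spaces" "HOL-Library.Poly_Mapping"
begin

definition bilinear_op :: "('k::field \<Rightarrow> 'a::ab_group_add \<Rightarrow> 'a) \<Rightarrow> ('a \<Rightarrow> 'a \<Rightarrow> 'a) \<Rightarrow> bool" where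
  "bilinear_op scale f \<longleftrightarrow>
     (\<forall>x. Vector_Spaces.linear scale scale (f x)) \<and> (\<forall>y. Vector_Spaces.linear scale scale (\<lambda>x. f x y))"

definition assoc_trialgebra ::
  "('k::field \<Rightarrow> 'a::ab_group_add \<Rightarrow> 'a) \<Rightarrow> ('a \<Rightarrow> 'a \<Rightarrow> 'a) \<Rightarrow> ('a \<Rightarrow> 'a \<Rightarrow> 'a) \<Rightarrow> ('a \<Rightarrow> 'a \<Rightarrow> 'a) \<Rightarrow> bool" where
  "assoc_trialgebra scale l r m \<longleftrightarrow>
     vector_space scale \<and> bilinear_op scale l \<and> bilinear_op scale r \<and> bilinear_op scale m \<and>
     (\<forall>x y z.
        l (l x y) z = l x (l y z) \<and>
        l (l x y) z = l x (r y z) \<and>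
        l (r x y) z = r x (l y z) \<and>
        r (l x y) z = r x (r y z) \<and>
        r (r x y) z = r x (r y z) \<and>
        l (l x y) z = l x (m y z) \<and>
        l (m x y) z = m x (l y z) \<and>
        m (l x y) z = m x (r y z) \<and>
        m (r x y) z = r x (m y z) \<and>
        r (m x y) z = r x (r y z) \<and>
        m (m x y) z = m x (m y z))"

definition trialgebra_morphism ::
  "('k::field \<Rightarrow> 'a::ab_group_add \<Rightarrow> 'a) \<Rightarrow> ('a \<Rightarrow> 'a \<Rightarrow> 'a) \<Rightarrow> ('a \<Rightarrow> 'a \<Rightarrow> 'a) \<Rightarrow> ('a \<Rightarrow> 'a \<Rightarrow> 'a) \<Rightarrow>
   ('k \<Rightarrow> 'b::ab_group_add \<Rightarrow> 'b) \<Rightarrow> ('b \<Rightarrow> 'b \<Rightarrow> 'b) \<Rightarrow> ('b \<Rightarrow> 'b \<Rightarrow> 'b) \<Rightarrow> ('b \<Rightarrow> 'b \<Rightarrow> 'b) \<Rightarrow>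
   ('a \<Rightarrow> 'b) \<Rightarrow> bool" where
  "trialgebra_morphism s1 l1 r1 m1 s2 l2 r2 m2 \<phi> \<longleftrightarrow>
     Vector_Spaces.linear s1 s2 \<phi> \<and>
     (\<forall>x y. \<phi> (l1 x y) = l2 (\<phi> x) (\<phi> y) \<and> \<phi> (r1 x y) = r2 (\<phi> x) (\<phi> y) \<and>
            \<phi> (m1 x y) = m2 (\<phi> x) (\<phi> y))"

text \<open>P = disjoint union of the P_n: an element of P_n is encoded as the pair (n, X)
 with X a nonempty subset of {0..n-1}.\<close>

typedef pset = "{(n::nat, X::nat set). 1 \<le> n \<and> X \<noteq> {} \<and> X \<subseteq> {..<n}}"
  by (rule exI[of _ "(1, {0})"]) auto

definition pset_left :: "pset \<Rightarrow> pset \<Rightarrow> pset" where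
  "pset_left x y = (case Rep_pset x of (p, X) \<Rightarrow> case Rep_pset y of (q, Y) \<Rightarrow>
      Abs_pset (p + q, X))"

definition pset_right :: "pset \<Rightarrow> pset \<Rightarrow> pset" where
  "pset_right x y = (case Rep_pset x of (p, X) \<Rightarrow> case Rep_pset y of (q, Y) \<Rightarrow>
      Abs_pset (p + q, (\<lambda>k. p + k) ` Y))"

definition pset_mid :: "pset \<Rightarrow> pset \<Rightarrow> pset" where
  "pset_mid x y = (case Rep_pset x of (p, X) \<Rightarrow> case Rep_pset y of (q, Y) \<Rightarrow>
      Abs_pset (p + q, X \<union> (\<lambda>k. p + k) ` Y))"

definition pm_scale :: "'k::field \<Rightarrow> (pset \<Rightarrow>\<^sub>0 'k) \<Rightarrow> (pset \<Rightarrow>\<^sub>0 'k)" where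
  "pm_scale c f = Poly_Mapping.map (\<lambda>v. c * v) f"

definition bilin_ext :: "(pset \<Rightarrow> pset \<Rightarrow> pset) \<Rightarrow> (pset \<Rightarrow>\<^sub>0 'k::field) \<Rightarrow> (pset \<Rightarrow>\<^sub>0 'k) \<Rightarrow> (pset \<Rightarrow>\<^sub>0 'k)" where
  "bilin_ext op f g =
     (\<Sum>x\<in>Poly_Mapping.keys f. \<Sum>y\<in>Poly_Mapping.keys g. Poly_Mapping.single (op x y) (Poly_Mapping.lookup f x * Poly_Mapping.lookup g y))"

definition free_gen :: "pset \<Rightarrow>\<^sub>0 'k::field" where
  "free_gen = Poly_Mapping.single (Abs_pset (1, {0})) 1"

end

theory Submission
  imports Defs
begin

(* A trioid is a set with three operations satisfying the eleven relations, and linearising a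
   trioid yields an associative trialgebra; P is the free trioid on {0}.  An element X of P_n is
   the left-bracketed word ((x o_1 x) o_2 x ...) o_(n-1) x in x = {0}, where o_k is left if k is
   not in X, right if k is the least element of X, and middle otherwise.  Evaluating this word at
   a in any trioid is multiplicative, because the relations rebracket a product of two such words
   into the left-bracketed word of the product.  Conversely every element of P is reached from
   {0} by multiplying with {0} on the right, so a morphism is determined by its value on {0}. *)

lemma lookup_pm_scale [simp]: "Poly_Mapping.lookup (pm_scale c F) x = c * Poly_Mapping.lookup F x"
  by (simp add: pm_scale_def Poly_Mapping.map.rep_eq when_def)

lemma pm_scale_single: "pm_scale c (Poly_Mapping.single x d) = Poly_Mapping.single x (c * d)"
  by (simp add: pm_scale_def)

lemma vector_space_pm_scale: "vector_space (pm_scale :: 'k::field \<Rightarrow> _)"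
  unfolding vector_space_def module_def
  by (auto intro!: poly_mapping_eqI simp: lookup_add algebra_simps)

lemma poly_mapping_eq_sum_single:
  assumes "finite S" "Poly_Mapping.keys F \<subseteq> S"
  shows "F = (\<Sum>x\<in>S. Poly_Mapping.single x (Poly_Mapping.lookup F x))"
proof (rule poly_mapping_eqI)
  fix k
  show "Poly_Mapping.lookup F k = Poly_Mapping.lookup (\<Sum>x\<in>S. Poly_Mapping.single x (Poly_Mapping.lookup F x)) k"
    using assms by (auto simp: lookup_sum lookup_single when_def in_keys_iff)
qed

lemma poly_mapping_single_induct [case_names zero single add]:
  fixes F :: "'a \<Rightarrow>\<^sub>0 'b::comm_monoid_add"
  assumes "P 0" "\<And>x c. P (Poly_Mapping.single x c)" "\<And>F G. P F \<Longrightarrow> P G \<Longrightarrow> P (F + G)"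
  shows "P F"
proof -
  have "P (\<Sum>x\<in>S. Poly_Mapping.single x (Poly_Mapping.lookup F x))" if "finite S" for S
    using that by (induction S rule: finite_induct) (auto intro: assms)
  then show ?thesis
    using poly_mapping_eq_sum_single[of "Poly_Mapping.keys F" F] by (metis finite_keys order_refl)
qed

lemma bilin_ext_eq_sum:
  assumes "finite S" "Poly_Mapping.keys F \<subseteq> S" "finite T" "Poly_Mapping.keys G \<subseteq> T"
  shows "bilin_ext op F G =
    (\<Sum>x\<in>S. \<Sum>y\<in>T. Poly_Mapping.single (op x y) (Poly_Mapping.lookup F x * Poly_Mapping.lookup G y))"
proof -
  have "bilin_ext op F G = (\<Sum>x\<in>Poly_Mapping.keys F. \<Sum>y\<in>T.
      Poly_Mapping.single (op x y) (Poly_Mapping.lookup F x * Poly_Mapping.lookup G y))"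
    unfolding bilin_ext_def
    by (intro sum.cong refl sum.mono_neutral_left) (use assms in \<open>auto simp: in_keys_iff\<close>)
  also have "\<dots> = (\<Sum>x\<in>S. \<Sum>y\<in>T.
      Poly_Mapping.single (op x y) (Poly_Mapping.lookup F x * Poly_Mapping.lookup G y))"
    by (rule sum.mono_neutral_left) (use assms in \<open>auto simp: in_keys_iff\<close>)
  finally show ?thesis .
qed

lemma keys_pm_scale_subset: "Poly_Mapping.keys (pm_scale c F) \<subseteq> Poly_Mapping.keys F"
  by (auto simp: in_keys_iff)

lemma bilin_ext_add_left: "bilin_ext op (F + F') G = bilin_ext op F G + bilin_ext op F' G"
proof -
  let ?S = "Poly_Mapping.keys F \<union> Poly_Mapping.keys F'" and ?T = "Poly_Mapping.keys G"
  show ?thesis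
    using bilin_ext_eq_sum[of ?S "F + F'" ?T G] bilin_ext_eq_sum[of ?S F ?T G]
      bilin_ext_eq_sum[of ?S F' ?T G]
    by (simp add: keys_add lookup_add distrib_right single_add sum.distrib)
qed

lemma bilin_ext_add_right: "bilin_ext op F (G + G') = bilin_ext op F G + bilin_ext op F G'"
proof -
  let ?S = "Poly_Mapping.keys F" and ?T = "Poly_Mapping.keys G \<union> Poly_Mapping.keys G'"
  show ?thesis
    using bilin_ext_eq_sum[of ?S F ?T "G + G'"] bilin_ext_eq_sum[of ?S F ?T G]
      bilin_ext_eq_sum[of ?S F ?T G']
    by (simp add: keys_add lookup_add distrib_left single_add sum.distrib)
qed

lemma pm_scale_sum: "pm_scale c (sum H S) = (\<Sum>x\<in>S. pm_scale c (H x))"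
  by (rule poly_mapping_eqI) (simp add: lookup_sum sum_distrib_left)

lemma bilin_ext_scale_left: "bilin_ext op (pm_scale c F) G = pm_scale c (bilin_ext op F G)"
  using bilin_ext_eq_sum[of "Poly_Mapping.keys F" "pm_scale c F" "Poly_Mapping.keys G"]
  by (simp add: keys_pm_scale_subset bilin_ext_def pm_scale_sum pm_scale_single mult.assoc)

lemma bilin_ext_scale_right: "bilin_ext op F (pm_scale c G) = pm_scale c (bilin_ext op F G)"
  using bilin_ext_eq_sum[of "Poly_Mapping.keys F" F "Poly_Mapping.keys G" "pm_scale c G"]
  by (simp add: keys_pm_scale_subset bilin_ext_def pm_scale_sum pm_scale_single algebra_simps)

lemma bilin_ext_zero_left [simp]: "bilin_ext op 0 G = 0"
  and bilin_ext_zero_right [simp]: "bilin_ext op F 0 = 0"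
  by (simp_all add: bilin_ext_def)

lemma bilin_ext_single:
  "bilin_ext op (Poly_Mapping.single x c) (Poly_Mapping.single y d) = Poly_Mapping.single (op x y) (c * d)"
  by (subst bilin_ext_eq_sum[of "{x}" _ "{y}"]) auto

lemma bilinear_op_bilin_ext: "bilinear_op pm_scale (bilin_ext op)"
  using vector_space_pm_scale
  by (simp add: bilinear_op_def linear_iff bilin_ext_add_left bilin_ext_add_right
      bilin_ext_scale_left bilin_ext_scale_right)

lemma bilin_ext_assoc:
  assumes "\<And>x y z. op1 (op2 x y) z = op3 x (op4 y z)"
  shows "bilin_ext op1 (bilin_ext op2 F G) H = bilin_ext op3 F (bilin_ext op4 G H)"
proof (induction F arbitrary: G H rule: poly_mapping_single_induct)
  case (single x c)
  show ?case
  proof (induction G arbitrary: H rule: poly_mapping_single_induct)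
    case (single y d)
    show ?case
    proof (induction H rule: poly_mapping_single_induct)
      case (single z e)
      show ?case by (simp add: bilin_ext_single assms mult.assoc)
    qed (simp_all add: bilin_ext_add_right)
  qed (simp_all add: bilin_ext_add_left bilin_ext_add_right)
qed (simp_all add: bilin_ext_add_left)

lemma bilinear_opD:
  assumes "bilinear_op s op"
  shows "op (u + v) w = op u w + op v w" "op u (v + w) = op u v + op u w"
    and "op 0 w = 0" "op u 0 = 0"
    and "op (s c u) (s d v) = s (c * d) (op u v)"
proof -
  have left: "module_hom s s (\<lambda>u. op u w)" and right: "module_hom s s (op u)" for u w
    using assms by (simp_all add: bilinear_op_def module_hom_iff_linear)
  show "op (u + v) w = op u w + op v w" "op 0 w = 0"
    using module_hom.add[OF left] module_hom.zero[OF left] by simp_all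
  show "op u (v + w) = op u v + op u w" "op u 0 = 0"
    using module_hom.add[OF right] module_hom.zero[OF right] by simp_all
  show "op (s c u) (s d v) = s (c * d) (op u v)"
    using module_hom.scale[OF left] module_hom.scale[OF right]
      module.scale_scale[OF module_hom.axioms(1)[OF left]]
    by (simp add: mult.commute)
qed

definition pm_extend ::
  "('k::field \<Rightarrow> 'a::ab_group_add \<Rightarrow> 'a) \<Rightarrow> (pset \<Rightarrow> 'a) \<Rightarrow> (pset \<Rightarrow>\<^sub>0 'k) \<Rightarrow> 'a" where
  "pm_extend s f F = (\<Sum>x\<in>Poly_Mapping.keys F. s (Poly_Mapping.lookup F x) (f x))"

context
  fixes s :: "'k::field \<Rightarrow> 'a::ab_group_add \<Rightarrow> 'a"
  assumes vs: "vector_space s"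
begin

interpretation vector_space s by (fact vs)

lemma pm_extend_eq_sum:
  assumes "finite S" "Poly_Mapping.keys F \<subseteq> S"
  shows "pm_extend s f F = (\<Sum>x\<in>S. s (Poly_Mapping.lookup F x) (f x))"
  unfolding pm_extend_def
  by (rule sum.mono_neutral_left) (use assms in \<open>auto simp: in_keys_iff\<close>)

lemma pm_extend_single: "pm_extend s f (Poly_Mapping.single x c) = s c (f x)"
  by (subst pm_extend_eq_sum[of "{x}"]) auto

lemma linear_pm_extend: "Vector_Spaces.linear pm_scale s (pm_extend s f)"
proof -
  have "pm_extend s f (F + G) = pm_extend s f F + pm_extend s f G" for F G
    using pm_extend_eq_sum[of "Poly_Mapping.keys F \<union> Poly_Mapping.keys G"]
    by (simp add: keys_add lookup_add scale_left_distrib sum.distrib)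
  moreover have "pm_extend s f (pm_scale c F) = s c (pm_extend s f F)" for c F
    using pm_extend_eq_sum[of "Poly_Mapping.keys F" "pm_scale c F"]
    by (simp add: keys_pm_scale_subset pm_extend_def scale_sum_right)
  ultimately show ?thesis
    by (simp add: linear_iff vector_space_pm_scale vs)
qed

end

lemma linear_pm_eqI:
  fixes h h' :: "(pset \<Rightarrow>\<^sub>0 'k::field) \<Rightarrow> 'a::ab_group_add"
  assumes "Vector_Spaces.linear pm_scale s h" "Vector_Spaces.linear pm_scale s h'"
    and "\<And>x. h (Poly_Mapping.single x 1) = h' (Poly_Mapping.single x 1)"
  shows "h = h'"
proof
  fix F :: "pset \<Rightarrow>\<^sub>0 'k"
  have "g F = (\<Sum>x\<in>Poly_Mapping.keys F. s (Poly_Mapping.lookup F x) (g (Poly_Mapping.single x 1)))"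
    if "Vector_Spaces.linear pm_scale s g" for g :: "(pset \<Rightarrow>\<^sub>0 'k) \<Rightarrow> 'a"
  proof -
    interpret module_hom pm_scale s g
      using that by (rule module_hom_linearI)
    have "g F = g (\<Sum>x\<in>Poly_Mapping.keys F. pm_scale (Poly_Mapping.lookup F x) (Poly_Mapping.single x 1))"
      using poly_mapping_eq_sum_single[of "Poly_Mapping.keys F" F] by (simp add: pm_scale_single)
    then show ?thesis
      by (simp add: sum scale)
  qed
  from this[OF assms(1)] this[OF assms(2)] show "h F = h' F"
    by (simp add: assms(3))
qed

lemma linear_bilin_ext_hom:
  assumes lin: "Vector_Spaces.linear pm_scale s h" and bil: "bilinear_op s op"
    and hom: "\<And>x y. h (Poly_Mapping.single (opP x y) 1) =
      op (h (Poly_Mapping.single x 1)) (h (Poly_Mapping.single y 1))"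
  shows "h (bilin_ext opP F G) = op (h F) (h G)"
proof -
  interpret module_hom pm_scale s h
    using lin by (rule module_hom_linearI)
  have h_single: "h (Poly_Mapping.single x c) = s c (h (Poly_Mapping.single x 1))" for x c
    using scale[of c "Poly_Mapping.single x 1"] by (simp add: pm_scale_single)
  show ?thesis
  proof (induction F arbitrary: G rule: poly_mapping_single_induct)
    case (single x c)
    show ?case
    proof (induction G rule: poly_mapping_single_induct)
      case (single y d)
      have "h (bilin_ext opP (Poly_Mapping.single x c) (Poly_Mapping.single y d)) =
          s (c * d) (op (h (Poly_Mapping.single x 1)) (h (Poly_Mapping.single y 1)))"
        by (simp only: bilin_ext_single h_single[of "opP x y" "c * d"] hom)
      then show ?case
        by (simp only: h_single[of x c] h_single[of y d] bilinear_opD(5)[OF bil])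
    qed (simp_all add: bilin_ext_add_right add bilinear_opD[OF bil])
  qed (simp_all add: bilin_ext_add_left add bilinear_opD[OF bil])
qed

locale assoc_trioid =
  fixes l r m :: "'a \<Rightarrow> 'a \<Rightarrow> 'a"
  assumes tri_assoc:
    "l (l x y) z = l x (l y z)"
    "l (l x y) z = l x (r y z)"
    "l (r x y) z = r x (l y z)"
    "r (l x y) z = r x (r y z)"
    "r (r x y) z = r x (r y z)"
    "l (l x y) z = l x (m y z)"
    "l (m x y) z = m x (l y z)"
    "m (l x y) z = m x (r y z)"
    "m (r x y) z = r x (m y z)"
    "r (m x y) z = r x (r y z)"
    "m (m x y) z = m x (m y z)"

lemma assoc_trialgebra_imp_trioid: "assoc_trialgebra s l r m \<Longrightarrow> assoc_trioid l r m"
  unfolding assoc_trialgebra_def assoc_trioid_def by blast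

lemma assoc_trialgebra_bilin_ext:
  assumes "assoc_trioid opL opR opM"
  shows "assoc_trialgebra (pm_scale :: 'k::field \<Rightarrow> _) (bilin_ext opL) (bilin_ext opR) (bilin_ext opM)"
  unfolding assoc_trialgebra_def
  by (simp only: vector_space_pm_scale bilinear_op_bilin_ext simp_thms)
    (intro allI conjI bilin_ext_assoc assoc_trioid.tri_assoc[OF assms])

definition pset_size :: "pset \<Rightarrow> nat" where
  "pset_size x = fst (Rep_pset x)"

definition pset_set :: "pset \<Rightarrow> nat set" where
  "pset_set x = snd (Rep_pset x)"

lemma pset_size_pos: "0 < pset_size x"
  and pset_set_nonempty: "pset_set x \<noteq> {}"
  and pset_set_subset: "pset_set x \<subseteq> {..<pset_size x}"
  using Rep_pset[of x] by (auto simp: pset_size_def pset_set_def)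

lemma pset_eqI: "pset_size x = pset_size y \<Longrightarrow> pset_set x = pset_set y \<Longrightarrow> x = y"
  by (metis Rep_pset_inject prod.collapse pset_set_def pset_size_def)

lemma
  assumes "0 < n" "X \<noteq> {}" "X \<subseteq> {..<n}"
  shows pset_size_Abs_pset: "pset_size (Abs_pset (n, X)) = n"
    and pset_set_Abs_pset: "pset_set (Abs_pset (n, X)) = X"
  using Abs_pset_inverse[of "(n, X)"] assms by (auto simp: pset_size_def pset_set_def)

lemma Rep_pset_eq: "Rep_pset x = (pset_size x, pset_set x)"
  by (simp add: pset_size_def pset_set_def)

lemma pset_size_left [simp]: "pset_size (pset_left x y) = pset_size x + pset_size y"
  and pset_set_left [simp]: "pset_set (pset_left x y) = pset_set x"
  and pset_size_right [simp]: "pset_size (pset_right x y) = pset_size x + pset_size y"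
  and pset_set_right [simp]: "pset_set (pset_right x y) = (\<lambda>k. pset_size x + k) ` pset_set y"
  and pset_size_mid [simp]: "pset_size (pset_mid x y) = pset_size x + pset_size y"
  and pset_set_mid [simp]: "pset_set (pset_mid x y) = pset_set x \<union> (\<lambda>k. pset_size x + k) ` pset_set y"
proof -
  let ?n = "pset_size x + pset_size y"
    and ?X = "pset_set x" and ?Y = "(\<lambda>k. pset_size x + k) ` pset_set y"
  have "0 < ?n" "?X \<noteq> {}" "?Y \<noteq> {}" "?X \<union> ?Y \<noteq> {}"
    using pset_size_pos[of x] pset_set_nonempty[of x] pset_set_nonempty[of y] by auto
  moreover have "?X \<subseteq> {..<?n}" "?Y \<subseteq> {..<?n}" "?X \<union> ?Y \<subseteq> {..<?n}"
    using pset_set_subset[of x] pset_set_subset[of y] by auto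
  ultimately show "pset_size (pset_left x y) = ?n" "pset_set (pset_left x y) = ?X"
    "pset_size (pset_right x y) = ?n" "pset_set (pset_right x y) = ?Y"
    "pset_size (pset_mid x y) = ?n" "pset_set (pset_mid x y) = ?X \<union> ?Y"
    by (simp_all add: pset_left_def pset_right_def pset_mid_def Rep_pset_eq
        pset_size_Abs_pset pset_set_Abs_pset)
qed

lemma assoc_trioid_pset: "assoc_trioid pset_left pset_right pset_mid"
  by unfold_locales (auto intro!: pset_eqI simp: image_image add.assoc image_Un)

definition pset_gen :: pset where
  "pset_gen = Abs_pset (1, {0})"

lemma pset_size_gen [simp]: "pset_size pset_gen = 1"
  and pset_set_gen [simp]: "pset_set pset_gen = {0}"
  by (simp_all add: pset_gen_def pset_size_Abs_pset pset_set_Abs_pset)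

lemma pset_decompose:
  assumes "1 < pset_size x"
  obtains y where "pset_size x = Suc (pset_size y)"
    and "x = pset_left y pset_gen \<or> x = pset_right y pset_gen \<or> x = pset_mid y pset_gen"
proof -
  obtain n where n: "pset_size x = Suc n" "0 < n"
    using assms by (cases "pset_size x") auto
  define X where "X = pset_set x"
  have X: "X \<noteq> {}" "X \<subseteq> {..<Suc n}"
    using pset_set_nonempty[of x] pset_set_subset[of x] n by (simp_all add: X_def)
  have Abs: "pset_size (Abs_pset (n, Y)) = n" "pset_set (Abs_pset (n, Y)) = Y"
    if "Y \<noteq> {}" "Y \<subseteq> {..<n}" for Y
    using that n by (simp_all add: pset_size_Abs_pset pset_set_Abs_pset)
  consider "n \<notin> X" | "X = {n}" | "n \<in> X" "X \<noteq> {n}"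
    by blast
  then show ?thesis
  proof cases
    case 1
    then have Y: "X \<subseteq> {..<n}"
      using X by (auto simp: less_Suc_eq)
    have "x = pset_left (Abs_pset (n, X)) pset_gen"
      using X Y n by (intro pset_eqI) (simp_all add: Abs X_def)
    then show ?thesis
      using that[of "Abs_pset (n, X)"] Abs X Y n by simp
  next
    case 2
    \<comment> \<open>any left factor of size n would do: \<open>pset_right\<close> only sees its size\<close>
    have Y: "{0} \<noteq> {}" "{0} \<subseteq> {..<n}"
      using n by auto
    have "x = pset_right (Abs_pset (n, {0})) pset_gen"
      using 2 Y n by (intro pset_eqI) (simp_all add: Abs X_def)
    then show ?thesis
      using that[of "Abs_pset (n, {0})"] Abs Y n by simp
  next
    case 3
    then have Y: "X - {n} \<noteq> {}" "X - {n} \<subseteq> {..<n}"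
      using X by (auto simp: less_Suc_eq)
    have "x = pset_mid (Abs_pset (n, X - {n})) pset_gen"
      using 3 Y n by (intro pset_eqI) (auto simp: Abs X_def)
    then show ?thesis
      using that[of "Abs_pset (n, X - {n})"] Abs Y n by simp
  qed
qed

lemma pset_induct [case_names gen left right mid]:
  assumes gen: "P pset_gen"
    and left: "\<And>x. P x \<Longrightarrow> P (pset_left x pset_gen)"
    and right: "\<And>x. P x \<Longrightarrow> P (pset_right x pset_gen)"
    and mid: "\<And>x. P x \<Longrightarrow> P (pset_mid x pset_gen)"
  shows "P x"
proof (induction "pset_size x" arbitrary: x rule: less_induct)
  case less
  show ?case
  proof (cases "pset_size x = 1")
    case True
    then have "x = pset_gen"
      using pset_set_nonempty[of x] pset_set_subset[of x] by (intro pset_eqI) auto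
    then show ?thesis
      using gen by simp
  next
    case False
    then have "1 < pset_size x"
      using pset_size_pos[of x] by simp
    then obtain y where "pset_size x = Suc (pset_size y)"
      and "x = pset_left y pset_gen \<or> x = pset_right y pset_gen \<or> x = pset_mid y pset_gen"
      by (rule pset_decompose)
    moreover have "P y"
      using less calculation(1) by simp
    ultimately show ?thesis
      using left right mid by blast
  qed
qed

section \<open>Words in an associative trioid\<close>

context assoc_trioid
begin

definition step_op :: "nat set \<Rightarrow> nat \<Rightarrow> 'a \<Rightarrow> 'a \<Rightarrow> 'a" where
  "step_op X k = (if k \<notin> X then l else if X \<inter> {..<k} = {} then r else m)"

fun word :: "'a \<Rightarrow> nat \<Rightarrow> nat set \<Rightarrow> 'a" where
  "word a 0 X = a"
| "word a (Suc 0) X = a"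
| "word a (Suc (Suc k)) X = step_op X (Suc k) (word a (Suc k) X) a"

lemma word_Suc: "0 < n \<Longrightarrow> word a (Suc n) X = step_op X n (word a n X) a"
  by (cases n) auto

lemma left_left_eq_step_op: "l (l x y) z = l x (step_op Y k y z)"
  by (simp add: step_op_def tri_assoc(1) tri_assoc(2,6)[symmetric])

lemma right_step_op_eq: "r (step_op Y k x y) z = r x (r y z)"
  by (simp add: step_op_def tri_assoc(4,5,10))

lemma step_op_right_eq: "step_op Y k (r x y) z = r x (step_op Y k y z)"
  by (simp add: step_op_def tri_assoc(3,5,9))

lemma step_op_mid_eq: "Y \<inter> {..<k} \<noteq> {} \<Longrightarrow> step_op Y k (m x y) z = m x (step_op Y k y z)"
  by (simp add: step_op_def tri_assoc(7,11))

lemma step_op_shift: "step_op ((\<lambda>k. p + k) ` Y) (p + k) = step_op Y k"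
proof -
  have "(\<lambda>k. p + k) ` Y \<inter> {..<p + k} = (\<lambda>k. p + k) ` (Y \<inter> {..<k})"
    and "p + k \<in> (\<lambda>k. p + k) ` Y \<longleftrightarrow> k \<in> Y"
    by auto
  then show ?thesis
    by (simp add: step_op_def)
qed

lemma word_cong: "X \<inter> {..<n} = Y \<inter> {..<n} \<Longrightarrow> word a n X = word a n Y"
proof (induction a n X rule: word.induct)
  case (3 a k X)
  have restrict: "Z \<inter> {..<Suc k} = (Z \<inter> {..<Suc (Suc k)}) \<inter> {..<Suc k}" for Z :: "nat set"
    by auto
  have "X \<inter> {..<Suc k} = Y \<inter> {..<Suc k}"
    using "3.prems" restrict by metis
  moreover have "Suc k \<in> X \<longleftrightarrow> Suc k \<in> Y"
    using "3.prems" by blast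
  ultimately show ?case
    using "3.IH" by (simp add: step_op_def)
qed simp_all

lemma word_right_cong: "0 < n \<Longrightarrow> r (word a n X) z = r (word a n Y) z"
proof (induction n arbitrary: z rule: nat_induct_non_zero)
  case (Suc n)
  then show ?case
    by (simp add: word_Suc right_step_op_eq)
qed simp

lemma word_left:
  assumes "0 < p" "0 < q" "X \<subseteq> {..<p}"
  shows "word a (p + q) X = l (word a p X) (word a q Y)"
  using \<open>0 < q\<close>
proof (induction q rule: nat_induct_non_zero)
  case 1
  have "p \<notin> X"
    using assms by auto
  then show ?case
    using \<open>0 < p\<close> by (simp add: word_Suc step_op_def)
next
  case (Suc q)
  have "p + q \<notin> X"
    using assms by auto
  then have "word a (p + Suc q) X = l (word a (p + q) X) a"
    using \<open>0 < p\<close> by (simp add: word_Suc step_op_def)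
  also have "\<dots> = l (l (word a p X) (word a q Y)) a"
    by (simp add: Suc.IH)
  also have "\<dots> = l (word a p X) (step_op Y q (word a q Y) a)"
    by (rule left_left_eq_step_op)
  also have "\<dots> = l (word a p X) (word a (Suc q) Y)"
    using \<open>0 < q\<close> by (simp add: word_Suc)
  finally show ?case .
qed

lemma word_right:
  assumes "0 < p" "0 < q" "X \<subseteq> {..<p}" "Y \<inter> {..<q} \<noteq> {}"
  shows "word a (p + q) ((\<lambda>k. p + k) ` Y) = r (word a p X) (word a q Y)"
  using assms(2,4)
proof (induction q rule: nat_induct_non_zero)
  case 1
  then have "step_op Y 0 = r"
    by (auto simp: step_op_def)
  then have "word a (Suc p) ((\<lambda>k. p + k) ` Y) = r (word a p ((\<lambda>k. p + k) ` Y)) a"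
    using step_op_shift[of p Y 0] \<open>0 < p\<close> by (simp add: word_Suc)
  then show ?case
    using word_right_cong \<open>0 < p\<close> by simp
next
  case (Suc q)
  let ?Z = "(\<lambda>k. p + k) ` Y"
  have "word a (p + Suc q) ?Z = step_op Y q (word a (p + q) ?Z) a"
    using step_op_shift[of p Y q] \<open>0 < p\<close> by (simp add: word_Suc)
  also have "\<dots> = r (word a p X) (word a (Suc q) Y)"
  proof (cases "Y \<inter> {..<q} = {}")
    case True
    then have "q \<in> Y"
      using Suc.prems by (auto simp: lessThan_Suc)
    with True have step: "step_op Y q = r"
      by (simp add: step_op_def)
    have "r (word a (p + q) ?Z) a = r (word a (p + q) X) a"
      using word_right_cong \<open>0 < p\<close> by simp
    also have "\<dots> = r (l (word a p X) (word a q Y)) a"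
      using word_left assms \<open>0 < q\<close> by simp
    also have "\<dots> = r (word a p X) (r (word a q Y) a)"
      by (rule tri_assoc(4))
    finally show ?thesis
      using step \<open>0 < q\<close> by (simp add: word_Suc)
  next
    case False
    then show ?thesis
      using Suc.IH \<open>0 < q\<close> by (simp add: word_Suc step_op_right_eq)
  qed
  finally show ?case .
qed

lemma step_op_Un_shift:
  assumes "X \<noteq> {}" "X \<subseteq> {..<p}"
  shows "step_op (X \<union> (\<lambda>k. p + k) ` Y) (p + k) = (if k \<in> Y then m else l)"
proof -
  have "X \<subseteq> (X \<union> (\<lambda>k. p + k) ` Y) \<inter> {..<p + k}"
    using assms(2) by auto
  then have "(X \<union> (\<lambda>k. p + k) ` Y) \<inter> {..<p + k} \<noteq> {}"
    using assms(1) by blast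
  moreover have "p + k \<in> X \<union> (\<lambda>k. p + k) ` Y \<longleftrightarrow> k \<in> Y"
    using assms(2) by auto
  ultimately show ?thesis
    by (simp add: step_op_def)
qed

lemma word_mid:
  assumes "0 < p" "0 < q" "X \<noteq> {}" "X \<subseteq> {..<p}" "Y \<inter> {..<q} \<noteq> {}"
  shows "word a (p + q) (X \<union> (\<lambda>k. p + k) ` Y) = m (word a p X) (word a q Y)"
  using assms(2,5)
proof (induction q rule: nat_induct_non_zero)
  case 1
  let ?Z = "X \<union> (\<lambda>k. p + k) ` Y"
  have "0 \<in> Y"
    using 1 by auto
  then have "word a (Suc p) ?Z = m (word a p ?Z) a"
    using step_op_Un_shift[OF assms(3,4), of Y 0] \<open>0 < p\<close> by (simp add: word_Suc)
  moreover have "word a p ?Z = word a p X"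
    using assms(4) by (intro word_cong) auto
  ultimately show ?case
    by simp
next
  case (Suc q)
  let ?Z = "X \<union> (\<lambda>k. p + k) ` Y"
  have "word a (p + Suc q) ?Z = (if q \<in> Y then m else l) (word a (p + q) ?Z) a"
    using step_op_Un_shift[OF assms(3,4), of Y q] \<open>0 < p\<close> by (simp add: word_Suc)
  also have "\<dots> = m (word a p X) (word a (Suc q) Y)"
  proof (cases "Y \<inter> {..<q} = {}")
    case True
    then have "q \<in> Y"
      using Suc.prems by (auto simp: lessThan_Suc)
    with True have step: "step_op Y q = r"
      by (simp add: step_op_def)
    have "word a (p + q) ?Z = word a (p + q) X"
      using True assms(4) by (intro word_cong) auto
    also have "\<dots> = l (word a p X) (word a q Y)"
      using word_left assms \<open>0 < q\<close> by simp
    finally show ?thesis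
      using step \<open>q \<in> Y\<close> \<open>0 < q\<close> by (simp add: word_Suc tri_assoc(8))
  next
    case False
    then have "(if q \<in> Y then m else l) = step_op Y q"
      by (simp add: step_op_def)
    then show ?thesis
      using False Suc.IH \<open>0 < q\<close> by (simp add: word_Suc step_op_mid_eq)
  qed
  finally show ?case .
qed

definition pset_word :: "'a \<Rightarrow> pset \<Rightarrow> 'a" where
  "pset_word a x = word a (pset_size x) (pset_set x)"

lemma pset_word_gen: "pset_word a pset_gen = a"
  by (simp add: pset_word_def)

lemma pset_word_left: "pset_word a (pset_left x y) = l (pset_word a x) (pset_word a y)"
  and pset_word_right: "pset_word a (pset_right x y) = r (pset_word a x) (pset_word a y)"
  and pset_word_mid: "pset_word a (pset_mid x y) = m (pset_word a x) (pset_word a y)"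
  using word_left word_right word_mid pset_size_pos pset_set_nonempty pset_set_subset
  by (simp_all add: pset_word_def Int_absorb2[OF pset_set_subset])

end

section \<open>The free associative trialgebra on one generator\<close>

lemma free_gen_eq: "free_gen = Poly_Mapping.single pset_gen 1"
  by (simp add: free_gen_def pset_gen_def)

abbreviation free_trialgebra_hom ::
  "('k::field \<Rightarrow> 'a::ab_group_add \<Rightarrow> 'a) \<Rightarrow>
    ('a \<Rightarrow> 'a \<Rightarrow> 'a) \<Rightarrow> ('a \<Rightarrow> 'a \<Rightarrow> 'a) \<Rightarrow> ('a \<Rightarrow> 'a \<Rightarrow> 'a) \<Rightarrow>
    ((pset \<Rightarrow>\<^sub>0 'k) \<Rightarrow> 'a) \<Rightarrow> bool" where
  "free_trialgebra_hom \<equiv>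
    trialgebra_morphism pm_scale (bilin_ext pset_left) (bilin_ext pset_right) (bilin_ext pset_mid)"

lemma
  assumes "assoc_trialgebra s l r m"
  shows free_trialgebra_hom_pm_extend_pset_word:
      "free_trialgebra_hom s l r m (pm_extend s (assoc_trioid.pset_word l r m a))"
    and pm_extend_pset_word_free_gen: "pm_extend s (assoc_trioid.pset_word l r m a) free_gen = a"
proof -
  interpret assoc_trioid l r m
    using assms by (rule assoc_trialgebra_imp_trioid)
  have vs: "vector_space s" and bil: "bilinear_op s l" "bilinear_op s r" "bilinear_op s m"
    using assms by (simp_all add: assoc_trialgebra_def)
  interpret vector_space s
    by (fact vs)
  have lin: "Vector_Spaces.linear pm_scale s (pm_extend s (pset_word a))"
    using vs by (rule linear_pm_extend)
  have single: "pm_extend s (pset_word a) (Poly_Mapping.single x 1) = pset_word a x" for x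
    by (simp add: pm_extend_single[OF vs])
  show "free_trialgebra_hom s l r m (pm_extend s (pset_word a))"
    unfolding trialgebra_morphism_def
    using lin linear_bilin_ext_hom[OF lin] bil
    by (simp add: single pset_word_left pset_word_right pset_word_mid)
  show "pm_extend s (pset_word a) free_gen = a"
    by (simp add: free_gen_eq single pset_word_gen)
qed

lemma free_trialgebra_hom_unique:
  assumes "free_trialgebra_hom s l r m \<phi>" "free_trialgebra_hom s l r m \<psi>"
    and "\<phi> free_gen = \<psi> free_gen"
  shows "\<phi> = \<psi>"
proof (rule linear_pm_eqI)
  show "Vector_Spaces.linear pm_scale s \<phi>" "Vector_Spaces.linear pm_scale s \<psi>"
    using assms(1,2) by (simp_all add: trialgebra_morphism_def)
  have hom: "h (bilin_ext pset_left F G) = l (h F) (h G)" "h (bilin_ext pset_right F G) = r (h F) (h G)"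
    "h (bilin_ext pset_mid F G) = m (h F) (h G)" if "free_trialgebra_hom s l r m h" for h F G
    using that by (simp_all add: trialgebra_morphism_def)
  have gen: "\<phi> (Poly_Mapping.single pset_gen 1) = \<psi> (Poly_Mapping.single pset_gen 1)"
    using assms(3) by (simp add: free_gen_eq)
  have single: "Poly_Mapping.single (op x pset_gen) 1 =
      bilin_ext op (Poly_Mapping.single x 1) (Poly_Mapping.single pset_gen 1)" for op x
    by (simp add: bilin_ext_single)
  fix x
  show "\<phi> (Poly_Mapping.single x 1) = \<psi> (Poly_Mapping.single x 1)"
    by (induction x rule: pset_induct) (simp_all add: gen single hom[OF assms(1)] hom[OF assms(2)])
qed

theorem theorem1p7:
  fixes scaleA :: "'k::field \<Rightarrow> 'a::ab_group_add \<Rightarrow> 'a"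
    and lA rA mA :: "'a \<Rightarrow> 'a \<Rightarrow> 'a"
  shows "assoc_trialgebra (pm_scale :: 'k \<Rightarrow> _) (bilin_ext pset_left) (bilin_ext pset_right) (bilin_ext pset_mid)
    \<and> (assoc_trialgebra scaleA lA rA mA \<longrightarrow>
        (\<forall>a. \<exists>!\<phi>. trialgebra_morphism pm_scale (bilin_ext pset_left) (bilin_ext pset_right) (bilin_ext pset_mid)
                                         scaleA lA rA mA \<phi>
                 \<and> \<phi> free_gen = a))"
proof (intro conjI impI allI)
  show "assoc_trialgebra (pm_scale :: 'k \<Rightarrow> _)
      (bilin_ext pset_left) (bilin_ext pset_right) (bilin_ext pset_mid)"
    using assoc_trioid_pset by (rule assoc_trialgebra_bilin_ext)
next
  fix a
  assume "assoc_trialgebra scaleA lA rA mA"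
  then show "\<exists>!\<phi>. free_trialgebra_hom scaleA lA rA mA \<phi> \<and> \<phi> free_gen = a"
    using free_trialgebra_hom_pm_extend_pset_word pm_extend_pset_word_free_gen free_trialgebra_hom_unique
    by metis
qed

end
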